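(* Let $\mu$ be a positive Borel measure on $\mathbb{R}$, absolutely continuous w.r.t. Lebesgue measure, with finite moments, supported on a set $E$ with infinitely many points, $c\in\mathbb{R}\setminus E$, $N>0$, and assume the monic orthogonal polynomials $P_n$ of $\mu$ satisfy $xP_n=P_{n+1}+\beta_nP_n+\gamma_nP_{n-1}$ and $\sigma(x)P_n'(x)=a(x;n)P_n(x)+b(x;n)P_{n-1}(x)$ with polynomials $\sigma,a(\cdot;n),b(\cdot;n)$. Then $$Q_{n-1}^{c,N}(x)=A_2(n)P_n(x)+B_2(x;n)P_{n-1}(x),\qquad [Q_{n-1}^{c,N}]'(x)=C_2(x;n)P_n(x)+D_2(x;n)P_{n-1}(x),$$ where $$A_2(n)=\frac{-\Lambda_{n-1}^c}{\gamma_{n-1}},\qquad B_2(x;n)=\Lambda_{n-1}^c\Big(\frac{1}{\Lambda_{n-1}^c}+\frac{x-\beta_{n-1}}{\gamma_{n-1}}\Big),$$ $$C_2(x;n)=-\frac{\Lambda_{n-1}^c}{\sigma(x)}\Big(\frac{a(x;n)}{\gamma_{n-1}}+\frac{b(x;n-1)}{\gamma_{n-1}}\Big(\frac{1}{\Lambda_{n-1}^c}+\frac{x-\beta_{n-1}}{\gamma_{n-1}}\Big)\Big),$$ $$D_2(x;n)=\frac{\Lambda_{n-1}^c}{\sigma(x)}\Big[\frac{\sigma(x)-b(x;n)}{\gamma_{n-1}}+b(x;n-1)\Big(\frac{a(x;n-1)}{b(x;n-1)}+\frac{x-\beta_{n-1}}{\gamma_{n-1}}\Big)\Big(\frac{1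}{\Lambda_{n-1}^c}+\frac{x-\beta_{n-1}}{\gamma_{n-1}}\Big)\Big].$$
   Context: $\{Q_n^c\}$ is the MOPS for $\int fg\frac{1}{x-c}d\mu$; $\{Q_n^{c,N}\}$ is the MOPS for $\int fg\frac{1}{x-c}d\mu+Nf(c)g(c)$. $\Lambda_m^c$ is the constant with $Q_m^{c,N}=P_m+\Lambda_m^cP_{m-1}$, namely $\Lambda_m^c=\frac{\pi_{m-1}-r_{m-1}}{1+NB_m^c}-\pi_{m-1}$ with $\pi_{m-1}=P_m(c)/P_{m-1}(c)$, $r_{m-1}=F_m(c)/F_{m-1}(c)$, $F_m(s)=\int\frac{P_m(x)}{x-s}d\mu(x)$, $F_{-1}=1$, $B_m^c=\frac{-Q_m^c(c)P_{m-1}(c)}{\int P_{m-1}^2d\mu}$. *)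

theory Defs
  imports "HOL-Analysis.Analysis" "HOL-Computational_Algebra.Polynomial"
begin

definition msupport :: "real measure \<Rightarrow> real set" where
  "msupport \<mu> = {x. \<forall>e>0. emeasure \<mu> (ball x e) > 0}"

definition ip_mu :: "real measure \<Rightarrow> real poly \<Rightarrow> real poly \<Rightarrow> real" where
  "ip_mu \<mu> f g = (\<integral>x. poly f x * poly g x \<partial>\<mu>)"

definition ip_cN :: "real measure \<Rightarrow> real \<Rightarrow> real \<Rightarrow> real poly \<Rightarrow> real poly \<Rightarrow> real" where
  "ip_cN \<mu> c N f g = (\<integral>x. poly f x * poly g x / (x - c) \<partial>\<mu>) + N * poly f c * poly g c"

definition is_MOPS :: "(real poly \<Rightarrow> real poly \<Rightarrow> real) \<Rightarrow> (nat \<Rightarrow> real poly) \<Rightarrow> bool" where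
  "is_MOPS ip Q \<longleftrightarrow> (\<forall>n. degree (Q n) = n \<and> lead_coeff (Q n) = 1 \<and>
      (\<forall>q. degree q < n \<longrightarrow> ip (Q n) q = 0) \<and> ip (Q n) (Q n) \<noteq> 0)"

definition Lam :: "(nat \<Rightarrow> real poly) \<Rightarrow> (nat \<Rightarrow> real poly) \<Rightarrow> nat \<Rightarrow> real" where
  "Lam P Q m = (THE l. Q m = P m + smult l (P (m - 1)))"

end

theory Submission
  imports Defs
begin

text \<open>Since \<open>\<mu>\<close> does not charge \<open>c\<close>, for every \<open>q\<close> of degree \<open>< k - 1\<close> the orthogonality of
  \<open>Q\<^sub>k\<close> to \<open>(x - c) q\<close> under the modified form is orthogonality of \<open>Q\<^sub>k\<close> to \<open>q\<close> under \<open>\<mu>\<close>.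
  Hence \<open>Q\<^sub>m - P\<^sub>m\<close>, of degree \<open>< m\<close>, is \<open>\<mu>\<close>-orthogonal to all polynomials of degree \<open>< m - 1\<close> and
  is therefore a multiple \<open>\<Lambda> P\<^sub>m\<^sub>-\<^sub>1\<close>. The three-term recurrence eliminates \<open>P\<^sub>m\<^sub>-\<^sub>1\<close> in favour of
  \<open>P\<^sub>m\<^sub>+\<^sub>1\<close> and \<open>P\<^sub>m\<close> (with \<open>\<gamma>\<^sub>m \<noteq> 0\<close> because \<open>\<gamma>\<^sub>m \<parallel>P\<^sub>m\<^sub>-\<^sub>1\<parallel>\<^sup>2 = \<parallel>P\<^sub>m\<parallel>\<^sup>2\<close>), and the structure relation
  does the same for the derivatives; what remains is rational arithmetic.
  Only absolute continuity (so that \<open>{c}\<close> is \<open>\<mu>\<close>-null) and the finiteness of moments are needed.\<close>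

lemma integrable_poly:
  assumes "\<And>k::nat. integrable \<mu> (\<lambda>t::real. t ^ k)"
  shows "integrable \<mu> (poly p)"
proof -
  have "integrable \<mu> (\<lambda>x. \<Sum>i\<le>degree p. coeff p i * x ^ i)"
    using assms by (intro Bochner_Integration.integrable_sum integrable_mult_right)
  then show ?thesis
    by (simp add: poly_altdef[abs_def])
qed

lemma integrable_poly_mult:
  assumes "\<And>k::nat. integrable \<mu> (\<lambda>t::real. t ^ k)"
  shows "integrable \<mu> (\<lambda>x. poly f x * poly g x)"
  using integrable_poly[OF assms, of "f * g"] by (simp add: poly_mult[abs_def])

lemma ip_mu_commute: "ip_mu \<mu> f g = ip_mu \<mu> g f"
  unfolding ip_mu_def by (simp add: mult.commute)

lemma ip_mu_smult_left: "ip_mu \<mu> (smult s f) g = s * ip_mu \<mu> f g"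
  unfolding ip_mu_def by (simp add: mult.assoc)

lemma ip_mu_mult_left_swap: "ip_mu \<mu> (r * f) g = ip_mu \<mu> f (r * g)"
  unfolding ip_mu_def by (simp add: algebra_simps)

lemma ip_mu_add_left:
  assumes "\<And>k::nat. integrable \<mu> (\<lambda>t::real. t ^ k)"
  shows "ip_mu \<mu> (f + g) h = ip_mu \<mu> f h + ip_mu \<mu> g h"
  unfolding ip_mu_def poly_add distrib_right
  by (rule Bochner_Integration.integral_add) (rule integrable_poly_mult[OF assms])+

lemma ip_mu_diff_left:
  assumes "\<And>k::nat. integrable \<mu> (\<lambda>t::real. t ^ k)"
  shows "ip_mu \<mu> (f - g) h = ip_mu \<mu> f h - ip_mu \<mu> g h"
  unfolding ip_mu_def poly_diff left_diff_distrib
  by (rule Bochner_Integration.integral_diff) (rule integrable_poly_mult[OF assms])+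

lemma degree_diff_less_of_lead_coeff_eq:
  fixes p q :: "'a::comm_ring poly"
  assumes "degree p = m" "degree q = m" "lead_coeff p = lead_coeff q" "m > 0"
  shows "degree (p - q) < m"
  using assms by (intro degree_lessI) (auto simp: coeff_eq_0 le_less)

lemma MOPS_orthogonal_eq_0:
  assumes moments: "\<And>k::nat. integrable \<mu> (\<lambda>t::real. t ^ k)"
    and P: "is_MOPS (ip_mu \<mu>) P"
    and high: "\<And>i. i \<ge> k \<Longrightarrow> coeff S i = 0"
    and orth: "\<And>q. degree q < k \<Longrightarrow> ip_mu \<mu> S q = 0"
  shows "S = 0"
proof (rule ccontr)
  assume "S \<noteq> 0"
  define d where "d = degree S"
  define s where "s = lead_coeff S"
  have "d < k"
    using \<open>S \<noteq> 0\<close> high unfolding d_def by (intro degree_lessI) auto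
  have Pd: "degree (P d) = d" "lead_coeff (P d) = 1" "ip_mu \<mu> (P d) (P d) \<noteq> 0"
    "\<And>q. degree q < d \<Longrightarrow> ip_mu \<mu> (P d) q = 0"
    using P unfolding is_MOPS_def by blast+
  \<comment> \<open>Pairing with \<open>P\<^sub>d\<close> sees only the leading term: \<open>\<langle>S, P\<^sub>d\<rangle> = s \<parallel>P\<^sub>d\<parallel>\<^sup>2 \<noteq> 0\<close>.\<close>
  have "ip_mu \<mu> (P d) (S - smult s (P d)) = 0"
  proof (cases "d = 0")
    case True
    then have "S = [:s:]" "P d = 1"
      using Pd(1,2) degree_0_id[of S] degree_0_id[of "P d"] by (auto simp: d_def s_def one_pCons)
    then have "S - smult s (P d) = 0"
      by simp
    then show ?thesis
      by (simp add: ip_mu_def)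
  next
    case False
    then show ?thesis
      using Pd by (intro Pd(4) degree_diff_less_of_lead_coeff_eq) (auto simp: d_def s_def)
  qed
  then have "ip_mu \<mu> (S - smult s (P d)) (P d) = 0"
    by (simp only: ip_mu_commute[of \<mu> "S - smult s (P d)" "P d"])
  then have "ip_mu \<mu> S (P d) = s * ip_mu \<mu> (P d) (P d)"
    by (simp add: ip_mu_diff_left[OF moments] ip_mu_smult_left)
  moreover have "ip_mu \<mu> S (P d) = 0"
    using orth Pd(1) \<open>d < k\<close> by simp
  moreover have "s \<noteq> 0"
    using \<open>S \<noteq> 0\<close> by (simp add: s_def)
  ultimately show False
    using Pd(3) by simp
qed

lemma MOPS_two_term_expansion:
  assumes moments: "\<And>k::nat. integrable \<mu> (\<lambda>t::real. t ^ k)"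
    and P: "is_MOPS (ip_mu \<mu>) P"
    and "m \<ge> 1" "degree R < m"
    and orth: "\<And>q. degree q < m - 1 \<Longrightarrow> ip_mu \<mu> R q = 0"
  shows "R = smult (coeff R (m - 1)) (P (m - 1))"
proof -
  have P': "degree (P (m - 1)) = m - 1" "lead_coeff (P (m - 1)) = 1"
    "\<And>q. degree q < m - 1 \<Longrightarrow> ip_mu \<mu> (P (m - 1)) q = 0"
    using P unfolding is_MOPS_def by blast+
  have "R - smult (coeff R (m - 1)) (P (m - 1)) = 0"
  proof (rule MOPS_orthogonal_eq_0[OF moments P])
    fix i assume "i \<ge> m - 1"
    then consider "i = m - 1" | "i \<ge> m"
      by linarith
    then show "coeff (R - smult (coeff R (m - 1)) (P (m - 1))) i = 0"
      by cases (use P' \<open>degree R < m\<close> in \<open>auto simp: coeff_eq_0\<close>)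
  next
    fix q :: "real poly" assume "degree q < m - 1"
    then show "ip_mu \<mu> (R - smult (coeff R (m - 1)) (P (m - 1))) q = 0"
      using orth P'(3) by (simp add: ip_mu_diff_left[OF moments] ip_mu_smult_left)
  qed
  then show ?thesis
    by simp
qed

text \<open>The point mass \<open>N \<delta>\<^sub>c\<close> is killed by the factor \<open>x - c\<close>, and so is the singularity at \<open>c\<close>.\<close>

lemma ip_cN_linear_factor:
  assumes sets_mu: "sets \<mu> = sets borel" and null: "{c} \<in> null_sets \<mu>"
  shows "ip_cN \<mu> c N f ([:- c, 1:] * g) = ip_mu \<mu> f g"
proof -
  have meas: "(\<lambda>x. poly p x) \<in> borel_measurable \<mu>" for p :: "real poly"
  proof -
    have "(\<lambda>x. poly p x) \<in> borel_measurable borel"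
      by (intro borel_measurable_continuous_onI continuous_intros)
    then show ?thesis
      using measurable_cong_sets[OF sets_mu refl, of borel] by metis
  qed
  have "AE x in \<mu>. x \<noteq> c"
    by (rule AE_I'[OF null]) auto
  have "(\<integral>x. poly f x * poly ([:- c, 1:] * g) x / (x - c) \<partial>\<mu>) = (\<integral>x. poly f x * poly g x \<partial>\<mu>)"
  proof (rule integral_cong_AE)
    show "AE x in \<mu>. poly f x * poly ([:- c, 1:] * g) x / (x - c) = poly f x * poly g x"
      using \<open>AE x in \<mu>. x \<noteq> c\<close> by eventually_elim (simp add: field_simps)
    have "(\<lambda>x. x - c) \<in> borel_measurable \<mu>"
      using meas[of "[:- c, 1:]"] by simp
    then show "(\<lambda>x. poly f x * poly ([:- c, 1:] * g) x / (x - c)) \<in> borel_measurable \<mu>"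
      using meas by measurable
    show "(\<lambda>x. poly f x * poly g x) \<in> borel_measurable \<mu>"
      using meas by measurable
  qed
  then show ?thesis
    by (simp add: ip_cN_def ip_mu_def)
qed

lemma MOPS_cN_orthogonal_mu:
  assumes "sets \<mu> = sets borel" "{c} \<in> null_sets \<mu>"
    and Q: "is_MOPS (ip_cN \<mu> c N) Q" and "degree q + 1 < k"
  shows "ip_mu \<mu> (Q k) q = 0"
proof -
  have "degree ([:- c, 1:] * q) < k"
    using degree_mult_le[of "[:- c, 1:]" q] \<open>degree q + 1 < k\<close> by simp
  then have "ip_cN \<mu> c N (Q k) ([:- c, 1:] * q) = 0"
    using Q unfolding is_MOPS_def by blast
  then show ?thesis
    using ip_cN_linear_factor[OF assms(1,2)] by simp
qed

lemma MOPS_nonzero: "is_MOPS ip P \<Longrightarrow> P k \<noteq> 0"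
  unfolding is_MOPS_def by (metis leading_coeff_0_iff zero_neq_one)

lemma Lam_eqI:
  assumes "Q m = P m + smult l (P (m - 1))" "P (m - 1) \<noteq> 0"
  shows "Lam P Q m = l"
  unfolding Lam_def
proof (rule the_equality)
  fix l' assume "Q m = P m + smult l' (P (m - 1))"
  then have "smult (l' - l) (P (m - 1)) = 0"
    using assms(1) by (simp add: smult_diff_left)
  then show "l' = l"
    using assms(2) by simp
qed (fact assms(1))

lemma Q_eq_P_plus_Lam:
  assumes moments: "\<And>k::nat. integrable \<mu> (\<lambda>t::real. t ^ k)"
    and "sets \<mu> = sets borel" "{c} \<in> null_sets \<mu>"
    and P: "is_MOPS (ip_mu \<mu>) P" and Q: "is_MOPS (ip_cN \<mu> c N) Q" and "m \<ge> 1"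
  shows "Q m = P m + smult (Lam P Q m) (P (m - 1))"
proof -
  define l where "l = coeff (Q m - P m) (m - 1)"
  have "Q m - P m = smult l (P (m - 1))"
    unfolding l_def
  proof (rule MOPS_two_term_expansion[OF moments P \<open>m \<ge> 1\<close>])
    have "degree (P m) = m" "lead_coeff (P m) = 1" "degree (Q m) = m" "lead_coeff (Q m) = 1"
      using P Q unfolding is_MOPS_def by blast+
    then show "degree (Q m - P m) < m"
      using \<open>m \<ge> 1\<close> by (intro degree_diff_less_of_lead_coeff_eq) auto
    fix q :: "real poly" assume "degree q < m - 1"
    then show "ip_mu \<mu> (Q m - P m) q = 0"
      using P MOPS_cN_orthogonal_mu[OF assms(2,3) Q, of q m]
      by (simp add: ip_mu_diff_left[OF moments] is_MOPS_def)
  qed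
  then show ?thesis
    using Lam_eqI[of Q m P l] MOPS_nonzero[OF P] by (simp add: algebra_simps)
qed

lemma recurrence_gamma_norm:
  assumes moments: "\<And>k::nat. integrable \<mu> (\<lambda>t::real. t ^ k)"
    and P: "is_MOPS (ip_mu \<mu>) P" and "m \<ge> 1"
    and rec: "[:0, 1:] * P m = P (m + 1) + smult \<beta> (P m) + smult \<gamma> (P (m - 1))"
  shows "\<gamma> * ip_mu \<mu> (P (m - 1)) (P (m - 1)) = ip_mu \<mu> (P m) (P m)"
proof -
  have Pd: "\<And>k. degree (P k) = k" "\<And>k. lead_coeff (P k) = 1"
    "\<And>k q. degree q < k \<Longrightarrow> ip_mu \<mu> (P k) q = 0"
    using P unfolding is_MOPS_def by blast+
  have "degree ([:0, 1:] * P (m - 1)) = m"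
    using Pd(1)[of "m - 1"] MOPS_nonzero[OF P] \<open>m \<ge> 1\<close> by (simp add: degree_mult_eq)
  moreover have "lead_coeff ([:0, 1:] * P (m - 1)) = 1"
    using Pd(2) MOPS_nonzero[OF P] by (simp add: lead_coeff_mult)
  ultimately have "degree ([:0, 1:] * P (m - 1) - P m) < m"
    using Pd \<open>m \<ge> 1\<close> by (intro degree_diff_less_of_lead_coeff_eq) auto
  then have "ip_mu \<mu> (P m) ([:0, 1:] * P (m - 1) - P m) = 0"
    using Pd(3) by blast
  then have "ip_mu \<mu> ([:0, 1:] * P (m - 1) - P m) (P m) = 0"
    by (simp only: ip_mu_commute[of \<mu> "[:0, 1:] * P (m - 1) - P m" "P m"])
  then have "ip_mu \<mu> (P m) (P m) = ip_mu \<mu> ([:0, 1:] * P (m - 1)) (P m)"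
    by (simp add: ip_mu_diff_left[OF moments])
  also have "\<dots> = ip_mu \<mu> (P (m - 1)) ([:0, 1:] * P m)"
    by (rule ip_mu_mult_left_swap)
  also have "\<dots> = ip_mu \<mu> ([:0, 1:] * P m) (P (m - 1))"
    by (rule ip_mu_commute)
  also have "\<dots> = \<gamma> * ip_mu \<mu> (P (m - 1)) (P (m - 1))"
    unfolding rec using Pd(1) \<open>m \<ge> 1\<close> Pd(3)[of "P (m - 1)" "m + 1"] Pd(3)[of "P (m - 1)" m]
    by (simp add: ip_mu_add_left[OF moments] ip_mu_smult_left)
  finally show ?thesis
    by (rule sym)
qed

text \<open>The variables stand for the values at \<open>x\<close> of \<open>Q\<^sub>m, P\<^sub>m, P\<^sub>m\<^sub>-\<^sub>1, P\<^sub>m\<^sub>+\<^sub>1\<close> and their derivatives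
  (primed), with \<open>s = \<sigma>(x)\<close> and \<open>a\<^sub>n, b\<^sub>n, a\<^sub>m, b\<^sub>m\<close> the structure coefficients at \<open>x\<close>.\<close>

lemma two_term_values:
  fixes \<gamma> s l bm q q' p p' pm1 pm1' pn pn' x \<beta> an bn am :: real
  assumes "\<gamma> \<noteq> 0" "s \<noteq> 0" "l \<noteq> 0" "bm \<noteq> 0"
    and Q: "q = p + l * pm1" and Q': "q' = p' + l * pm1'"
    and rec: "x * p = pn + \<beta> * p + \<gamma> * pm1"
    and rec': "p + x * p' = pn' + \<beta> * p' + \<gamma> * pm1'"
    and struct_n: "s * pn' = an * pn + bn * p"
    and struct_m: "s * p' = am * p + bm * pm1"
  shows "q = - l / \<gamma> * pn + l * (1 / l + (x - \<beta>) / \<gamma>) * p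
         \<and> q' = - (l / s) * (an / \<gamma> + bm / \<gamma> * (1 / l + (x - \<beta>) / \<gamma>)) * pn
            + l / s * ((s - bn) / \<gamma> + bm * (am / bm + (x - \<beta>) / \<gamma>) * (1 / l + (x - \<beta>) / \<gamma>)) * p"
proof
  have pm1: "pm1 = (x * p - pn - \<beta> * p) / \<gamma>"
    using rec \<open>\<gamma> \<noteq> 0\<close> by (simp add: field_simps)
  show "q = - l / \<gamma> * pn + l * (1 / l + (x - \<beta>) / \<gamma>) * p"
    using assms(1,3) unfolding Q pm1 by (simp add: field_simps)
next
  define C where "C = - l * (an * \<gamma> + bm * (\<gamma> / l + (x - \<beta>)))"
  define D where "D = l * ((s - bn) * \<gamma> + (am * \<gamma> + bm * (x - \<beta>)) * (\<gamma> / l + (x - \<beta>)))"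
  have "s * \<gamma> * \<gamma> * q'
      = \<gamma> * \<gamma> * (s * p') + l * \<gamma> * (s * p + x * (s * p') - s * pn' - \<beta> * (s * p'))"
    unfolding Q' using rec' by algebra
  also have "\<dots> = C * pn + D * p"
    unfolding struct_n struct_m C_def D_def using rec \<open>l \<noteq> 0\<close> by (simp add: field_simps) algebra
  finally have "q' = C / (s * \<gamma> * \<gamma>) * pn + D / (s * \<gamma> * \<gamma>) * p"
    using assms(1,2) by (simp add: field_simps)
  moreover have "C / (s * \<gamma> * \<gamma>) = - (l / s) * (an / \<gamma> + bm / \<gamma> * (1 / l + (x - \<beta>) / \<gamma>))"
    using assms(1-3) unfolding C_def by (simp add: field_simps)
  moreover have "D / (s * \<gamma> * \<gamma>)
      = l / s * ((s - bn) / \<gamma> + bm * (am / bm + (x - \<beta>) / \<gamma>) * (1 / l + (x - \<beta>) / \<gamma>))"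
    using assms(1-4) unfolding D_def by (simp add: field_simps)
  ultimately show "q' = - (l / s) * (an / \<gamma> + bm / \<gamma> * (1 / l + (x - \<beta>) / \<gamma>)) * pn
            + l / s * ((s - bn) / \<gamma> + bm * (am / bm + (x - \<beta>) / \<gamma>) * (1 / l + (x - \<beta>) / \<gamma>)) * p"
    by simp
qed

theorem lemma4:
  fixes \<mu> :: "real measure" and c N :: real
    and P Q :: "nat \<Rightarrow> real poly"
    and \<beta> \<gamma> :: "nat \<Rightarrow> real"
    and \<sigma> :: "real poly" and a b :: "nat \<Rightarrow> real poly"
    and n :: nat and x :: real
  assumes sets_mu: "sets \<mu> = sets borel"
    and ac: "absolutely_continuous lborel \<mu>"
    and moments: "\<And>k::nat. integrable \<mu> (\<lambda>t. t ^ k)"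
    and inf_supp: "infinite (msupport \<mu>)"
    and c_out: "c \<notin> msupport \<mu>"
    and N_pos: "N > 0"
    and P_mops: "is_MOPS (ip_mu \<mu>) P"
    and Q_mops: "is_MOPS (ip_cN \<mu> c N) Q"
    and rec: "\<And>m. m \<ge> 1 \<Longrightarrow>
               [:0, 1:] * P m = P (m + 1) + smult (\<beta> m) (P m) + smult (\<gamma> m) (P (m - 1))"
    and struct: "\<And>m. m \<ge> 1 \<Longrightarrow> \<sigma> * pderiv (P m) = a m * P m + b m * P (m - 1)"
    and n2: "n \<ge> 2"
    and Lam_nz: "Lam P Q (n - 1) \<noteq> 0"
    and sigma_nz: "poly \<sigma> x \<noteq> 0"
    and b_nz: "poly (b (n - 1)) x \<noteq> 0"
  shows "let L = Lam P Q (n - 1); g = \<gamma> (n - 1); be = \<beta> (n - 1);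
             A2 = - L / g;
             B2 = L * (1 / L + (x - be) / g);
             C2 = - (L / poly \<sigma> x) * (poly (a n) x / g
                     + poly (b (n - 1)) x / g * (1 / L + (x - be) / g));
             D2 = (L / poly \<sigma> x) * ((poly \<sigma> x - poly (b n) x) / g
                     + poly (b (n - 1)) x * (poly (a (n - 1)) x / poly (b (n - 1)) x + (x - be) / g)
                       * (1 / L + (x - be) / g))
         in poly (Q (n - 1)) x = A2 * poly (P n) x + B2 * poly (P (n - 1)) x
          \<and> poly (pderiv (Q (n - 1))) x = C2 * poly (P n) x + D2 * poly (P (n - 1)) x"
proof -
  define m where "m = n - 1"
  have "m \<ge> 1" and n: "n = m + 1"
    using n2 by (auto simp: m_def)
  have "{c} \<in> null_sets lborel"
    by (simp add: null_sets_def)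
  then have "{c} \<in> null_sets \<mu>"
    using ac by (auto simp: absolutely_continuous_def)
  then have Q_eq: "Q m = P m + smult (Lam P Q m) (P (m - 1))"
    using Q_eq_P_plus_Lam[OF moments sets_mu _ P_mops Q_mops \<open>m \<ge> 1\<close>] by simp
  have "\<gamma> m \<noteq> 0"
    using recurrence_gamma_norm[OF moments P_mops \<open>m \<ge> 1\<close> rec[OF \<open>m \<ge> 1\<close>]] P_mops
    by (auto simp: is_MOPS_def)
  show ?thesis
    unfolding Let_def m_def[symmetric]
  proof (rule two_term_values[OF \<open>\<gamma> m \<noteq> 0\<close> sigma_nz])
    show "poly (Q m) x = poly (P m) x + Lam P Q m * poly (P (m - 1)) x"
      "poly (pderiv (Q m)) x = poly (pderiv (P m)) x + Lam P Q m * poly (pderiv (P (m - 1))) x"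
      by (simp_all add: Q_eq pderiv_add pderiv_smult)
    show "x * poly (P m) x = poly (P n) x + \<beta> m * poly (P m) x + \<gamma> m * poly (P (m - 1)) x"
      "poly (P m) x + x * poly (pderiv (P m)) x
         = poly (pderiv (P n)) x + \<beta> m * poly (pderiv (P m)) x + \<gamma> m * poly (pderiv (P (m - 1))) x"
      using arg_cong[OF rec[OF \<open>m \<ge> 1\<close>], of "\<lambda>p. poly p x"]
        arg_cong[OF rec[OF \<open>m \<ge> 1\<close>], of "\<lambda>p. poly (pderiv p) x"]
      by (simp_all add: n pderiv_add pderiv_smult pderiv_mult pderiv_pCons)
    show "poly \<sigma> x * poly (pderiv (P n)) x = poly (a n) x * poly (P n) x + poly (b n) x * poly (P m) x"
      "poly \<sigma> x * poly (pderiv (P m)) x = poly (a m) x * poly (P m) x + poly (b m) x * poly (P (m - 1)) x"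
      using arg_cong[OF struct[of n], of "\<lambda>p. poly p x"] arg_cong[OF struct[OF \<open>m \<ge> 1\<close>], of "\<lambda>p. poly p x"]
      by (simp_all add: n)
  qed (use Lam_nz b_nz in \<open>simp_all add: m_def\<close>)
qed

end
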